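(* Let $b\ge2$ be an integer. Then for every positive integer $n$, \[2\sum_{m=1}^nH(n,m)b^m<\sum_{m=1}^{n+1}H(n+1,m)b^m.\]
   Context: A composition of a positive integer $n$ is an ordered tuple $(c_1,\ldots,c_m)$ of positive integers summing to $n$ ($m$ parts); it is headstrong if $c_1\ge c_i$ for all $i$. $H(n,m)$ is the number of headstrong compositions of $n$ with exactly $m$ parts. *)

theory Defs
  imports Main
begin

definition compositions :: "nat \<Rightarrow> nat \<Rightarrow> nat list set" where
  "compositions n m = {cs. length cs = m \<and> (\<forall>c\<in>set cs. c > 0) \<and> sum_list cs = n}"

definition headstrong :: "nat list \<Rightarrow> bool" where
  "headstrong cs \<longleftrightarrow> cs \<noteq> [] \<and> (\<forall>c\<in>set cs. c \<le> hd cs)"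

definition H :: "nat \<Rightarrow> nat \<Rightarrow> nat" where
  "H n m = card {cs \<in> compositions n m. headstrong cs}"

end

theory Submission
  imports Defs
begin

text \<open>Appending a part 1 to a headstrong composition of \<open>n\<close> with \<open>m\<close> parts gives one of
  \<open>n + 1\<close> with \<open>m + 1\<close> parts, so \<open>H n m \<le> H (n + 1) (m + 1)\<close>. Hence each term
  \<open>2 * H n m * b ^ m\<close> on the left is dominated by \<open>H (n + 1) (m + 1) * b ^ (m + 1)\<close> on the right,
  and the one-part composition \<open>(n + 1)\<close> contributes the extra term \<open>b\<close> that makes the
  inequality strict.\<close>

lemma finite_compositions: "finite (compositions n m)"
proof (rule finite_subset)
  show "compositions n m \<subseteq> {xs. set xs \<subseteq> {..n} \<and> length xs = m}"
    by (auto simp: compositions_def member_le_sum_list)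
  show "finite {xs. set xs \<subseteq> {..n} \<and> length xs = m}"
    using finite_lists_length_eq[of "{..n}" m] by simp
qed

lemma H_le_H_Suc_Suc: "H n m \<le> H (Suc n) (Suc m)"
  unfolding H_def
proof (rule card_inj_on_le[where f = "\<lambda>cs. cs @ [1]"])
  show "inj_on (\<lambda>cs. cs @ [1]) {cs \<in> compositions n m. headstrong cs}"
    by (auto simp: inj_on_def)
  show "(\<lambda>cs. cs @ [1]) ` {cs \<in> compositions n m. headstrong cs}
        \<subseteq> {cs \<in> compositions (Suc n) (Suc m). headstrong cs}"
    by (auto simp: compositions_def headstrong_def hd_append Suc_leI)
  show "finite {cs \<in> compositions (Suc n) (Suc m). headstrong cs}"
    using finite_compositions by simp
qed

lemma H_one_part: "n > 0 \<Longrightarrow> H n 1 = 1"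
proof -
  assume "n > 0"
  then have "{cs \<in> compositions n 1. headstrong cs} = {[n]}"
    by (auto simp: compositions_def headstrong_def length_Suc_conv)
  then show "H n 1 = 1"
    by (simp add: H_def)
qed

lemma double_weighted_sum_less_shifted:
  fixes f g :: "nat \<Rightarrow> nat" and b n :: nat
  assumes "b \<ge> 2" and "\<And>m. f m \<le> g (Suc m)" and "g 1 > 0"
  shows "2 * (\<Sum>m=1..n. f m * b ^ m) < (\<Sum>m=1..Suc n. g m * b ^ m)"
proof -
  have "2 * (\<Sum>m=1..n. f m * b ^ m) = (\<Sum>m=1..n. 2 * (f m * b ^ m))"
    by (simp add: sum_distrib_left)
  also have "\<dots> \<le> (\<Sum>m=1..n. g (Suc m) * b ^ Suc m)"
  proof (rule sum_mono)
    fix m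
    have "2 * (f m * b ^ m) \<le> b * (g (Suc m) * b ^ m)"
      using assms(1) assms(2)[of m] by (intro mult_mono) auto
    then show "2 * (f m * b ^ m) \<le> g (Suc m) * b ^ Suc m"
      by (simp add: algebra_simps)
  qed
  also have "\<dots> = (\<Sum>m=Suc 1..Suc n. g m * b ^ m)"
    by (rule sum.shift_bounds_cl_Suc_ivl[symmetric])
  also have "\<dots> < g 1 * b + (\<Sum>m=Suc 1..Suc n. g m * b ^ m)"
    using assms(1,3) by simp
  also have "\<dots> = (\<Sum>m=1..Suc n. g m * b ^ m)"
    by (simp add: sum.atLeast_Suc_atMost)
  finally show ?thesis .
qed

theorem mainTheorem17:
  fixes b n :: nat
  assumes "b \<ge> 2" and "n \<ge> 1"
  shows "2 * (\<Sum>m=1..n. H n m * b ^ m) < (\<Sum>m=1..n+1. H (n+1) m * b ^ m)"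
proof -
  have "2 * (\<Sum>m=1..n. H n m * b ^ m) < (\<Sum>m=1..Suc n. H (Suc n) m * b ^ m)"
  proof (rule double_weighted_sum_less_shifted)
    show "H n m \<le> H (Suc n) (Suc m)" for m
      by (rule H_le_H_Suc_Suc)
    show "H (Suc n) 1 > 0"
      by (subst H_one_part) simp_all
  qed (rule assms(1))
  then show ?thesis by simp
qed

end
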